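(* Let $A$ be a Nakayama algebra with $n$ simple modules. The following are equivalent: (1) $A$ has finite global dimension and magnitude one; (2) $A$ has a unique (up to isomorphism) indecomposable projective module of dimension $n$; (3) $A$ has finite global dimension and Loewy length at least $n$.
   Context: Nakayama algebras are connected finite-dimensional algebras over an algebraically closed field $K$ all of whose indecomposable modules are uniserial, given as bound quiver algebras on a linear quiver $0\to\cdots\to n-1$ or cyclic quiver $0\to\cdots\to n-1\to 0$ with admissible relations. The Kupisch series is $[c_0,\dots,c_{n-1}]$ with $c_i=\dim_K e_iA$ the dimension of the $i$-th indecomposable projective module; the Loewy length is $\max_i c_i$. The Cartan matrix $\mathbf C_A$ has entries $\dim_K e_iAe_j$; for $A$ of finite global dimension it is invertible, and the magnitude of $A$ is the sum of all entries of $\mathbf C_A^{-1}$. *)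

theory Defs
  imports Complex_Main
begin

text \<open>A basic connected Nakayama algebra with n simple modules (vertices 0..n-1) is determined
up to isomorphism by its Kupisch series c 0, ..., c (n-1), where c i = dim e_i A.
Arrows go i -> i+1 (indices mod n in the cyclic case); e_i A is uniserial with
composition factors S_i, S_(i+1), ..., S_(i + c i - 1) (indices mod n).\<close>

definition nakayama_linear :: "nat \<Rightarrow> (nat \<Rightarrow> nat) \<Rightarrow> bool" where
  "nakayama_linear n c \<longleftrightarrow> n \<ge> 1 \<and> c (n - 1) = 1 \<and>
     (\<forall>i. i + 1 < n \<longrightarrow> c i \<ge> 2 \<and> c (i + 1) \<ge> c i - 1)"

definition nakayama_cyclic :: "nat \<Rightarrow> (nat \<Rightarrow> nat) \<Rightarrow> bool" where
  "nakayama_cyclic n c \<longleftrightarrow> n \<ge> 1 \<and>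
     (\<forall>i<n. c i \<ge> 2 \<and> c ((i + 1) mod n) \<ge> c i - 1)"

definition nakayama_kupisch :: "nat \<Rightarrow> (nat \<Rightarrow> nat) \<Rightarrow> bool" where
  "nakayama_kupisch n c \<longleftrightarrow> nakayama_linear n c \<or> nakayama_cyclic n c"

text \<open>Indecomposable modules: pairs (i, k) with 1 \<le> k \<le> c i, standing for e_i A / e_i J^k
(top S_i, length k). Its first syzygy e_i J^k is the
indecomposable module with top S_((i+k) mod n) and length c i - k.\<close>

definition syzygy :: "nat \<Rightarrow> (nat \<Rightarrow> nat) \<Rightarrow> nat \<times> nat \<Rightarrow> nat \<times> nat" where
  "syzygy n c M = ((fst M + snd M) mod n, c (fst M) - snd M)"

definition is_projective :: "(nat \<Rightarrow> nat) \<Rightarrow> nat \<times> nat \<Rightarrow> bool" where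
  "is_projective c M \<longleftrightarrow> snd M = c (fst M)"

definition pd_le :: "nat \<Rightarrow> (nat \<Rightarrow> nat) \<Rightarrow> nat \<times> nat \<Rightarrow> nat \<Rightarrow> bool" where
  "pd_le n c M d \<longleftrightarrow> (\<exists>m\<le>d. is_projective c ((syzygy n c ^^ m) M))"

text \<open>Global dimension is finite iff all simple modules (i,1) have finite projective dimension
(equivalently there is a uniform bound, since there are finitely many simples).\<close>
definition finite_gldim :: "nat \<Rightarrow> (nat \<Rightarrow> nat) \<Rightarrow> bool" where
  "finite_gldim n c \<longleftrightarrow> (\<exists>d. \<forall>i<n. pd_le n c (i, 1) d)"

definition loewy_length :: "nat \<Rightarrow> (nat \<Rightarrow> nat) \<Rightarrow> nat" where
  "loewy_length n c = Max (c ` {..<n})"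

text \<open>Cartan matrix: C i j = dim e_i A e_j = multiplicity of S_j in e_i A.\<close>
definition cartan :: "nat \<Rightarrow> (nat \<Rightarrow> nat) \<Rightarrow> nat \<Rightarrow> nat \<Rightarrow> rat" where
  "cartan n c i j = of_nat (card {k. k < c i \<and> (i + k) mod n = j})"

definition is_inverse_mat :: "nat \<Rightarrow> (nat \<Rightarrow> nat \<Rightarrow> rat) \<Rightarrow> (nat \<Rightarrow> nat \<Rightarrow> rat) \<Rightarrow> bool" where
  "is_inverse_mat n C D \<longleftrightarrow>
     (\<forall>i<n. \<forall>j<n. (\<Sum>k<n. C i k * D k j) = (if i = j then 1 else 0)) \<and>
     (\<forall>i<n. \<forall>j<n. (\<Sum>k<n. D i k * C k j) = (if i = j then 1 else 0))"

text \<open>Magnitude: sum of all entries of the inverse of the Cartan matrix (meaningful when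
the Cartan matrix is invertible, e.g. for finite global dimension).\<close>
definition magnitude :: "nat \<Rightarrow> (nat \<Rightarrow> nat) \<Rightarrow> rat" where
  "magnitude n c = (THE s. \<exists>D. is_inverse_mat n (cartan n c) D \<and> s = (\<Sum>i<n. \<Sum>j<n. D i j))"

end

(*
  Lift the vertices to the integers and let F a = a + c (a mod n), so that the projective module
  at a is the interval [a, F a). F is monotone and commutes with translation by n, and the
  syzygies of the simple module [a, a + 1) are the intervals [F^k a, F^k (a + 1)) and
  [F^k (a + 1), F^(k+1) a); hence that simple module has finite projective dimension iff these
  intervals eventually become empty. The vertices i with c i = n are the fixed points of the
  monotone map F - n, whose orbits run into fixed points. If the fixed points form a single residue
  class, the orbits of a and a + 1 end in fixed points at distance 0 or n, which ends the
  resolution; two fixed points x < y < x + n would force every orbit in [x, y] to reach x.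

  With finite global dimension, row j of the inverse Cartan matrix is the alternating sum of the
  tops of the projective resolution of the j-th simple module, so the magnitude is the number of
  simple modules of even projective dimension. Multiplying the Cartan matrix with the row sums of
  its inverse shows that every indecomposable projective has exactly one composition factor of
  even projective dimension; this yields magnitude one as soon as some c i \<ge> n, and conversely
  locates a fixed point of F - n when the magnitude is one.
*)

theory Submission
  imports Defs "Jordan_Normal_Form.Determinant"
begin

lemma is_inverse_mat_if_left_inverse:
  fixes C D :: "nat \<Rightarrow> nat \<Rightarrow> rat"
  assumes left: "\<forall>i<n. \<forall>j<n. (\<Sum>k<n. D i k * C k j) = (if i = j then 1 else 0)"
  shows "is_inverse_mat n C D"
proof -
  define A where "A = mat n n (\<lambda>(i, j). D i j)"
  define B where "B = mat n n (\<lambda>(i, j). C i j)"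
  have carrier: "A \<in> carrier_mat n n" "B \<in> carrier_mat n n"
    by (simp_all add: A_def B_def)
  have "A * B = 1\<^sub>m n"
    using left by (intro eq_matI) (auto simp: A_def B_def scalar_prod_def atLeast0LessThan)
  with carrier have BA: "B * A = 1\<^sub>m n"
    by (rule mat_mult_left_right_inverse)
  have "(\<Sum>k<n. C i k * D k j) = (if i = j then 1 else 0)" if "i < n" "j < n" for i j
  proof -
    have "(B * A) $$ (i, j) = (1\<^sub>m n :: rat mat) $$ (i, j)"
      using BA by simp
    with that show ?thesis
      by (simp add: A_def B_def scalar_prod_def atLeast0LessThan)
  qed
  with left show ?thesis
    by (simp add: is_inverse_mat_def)
qed

lemma is_inverse_mat_unique:
  assumes D: "is_inverse_mat n C D" and D': "is_inverse_mat n C D'" and "i < n" "j < n"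
  shows "D i j = D' i j"
proof -
  have "D' i j = (\<Sum>l<n. if i = l then D' l j else 0)"
    using \<open>i < n\<close> by simp
  also have "\<dots> = (\<Sum>l<n. (\<Sum>k<n. D i k * C k l) * D' l j)"
    using D \<open>i < n\<close> by (intro sum.cong) (auto simp: is_inverse_mat_def)
  also have "\<dots> = (\<Sum>k<n. D i k * (\<Sum>l<n. C k l * D' l j))"
    unfolding sum_distrib_left sum_distrib_right mult.assoc by (rule sum.swap)
  also have "\<dots> = (\<Sum>k<n. if k = j then D i k else 0)"
    using D' \<open>j < n\<close> by (intro sum.cong) (auto simp: is_inverse_mat_def)
  also have "\<dots> = D i j"
    using \<open>j < n\<close> by simp
  finally show ?thesis ..
qed

lemma magnitude_eq_if_inverse:
  assumes D: "is_inverse_mat n (cartan n c) D"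
  shows "magnitude n c = (\<Sum>i<n. \<Sum>j<n. D i j)"
  unfolding magnitude_def
proof (rule the_equality)
  show "\<exists>D'. is_inverse_mat n (cartan n c) D' \<and> (\<Sum>i<n. \<Sum>j<n. D i j) = (\<Sum>i<n. \<Sum>j<n. D' i j)"
    using D by blast
next
  fix s
  assume "\<exists>D'. is_inverse_mat n (cartan n c) D' \<and> s = (\<Sum>i<n. \<Sum>j<n. D' i j)"
  then show "s = (\<Sum>i<n. \<Sum>j<n. D i j)"
    using is_inverse_mat_unique[OF _ D] by (auto intro!: sum.cong)
qed

lemma sum_mult_row_sums_inverse:
  assumes "is_inverse_mat n C D" "i < n"
  shows "(\<Sum>l<n. C i l * (\<Sum>j<n. D l j)) = 1"
proof -
  have "(\<Sum>l<n. C i l * (\<Sum>j<n. D l j)) = (\<Sum>j<n. \<Sum>l<n. C i l * D l j)"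
    unfolding sum_distrib_left by (rule sum.swap)
  also have "\<dots> = (\<Sum>j<n. if i = j then 1 else 0)"
    using assms by (intro sum.cong) (auto simp: is_inverse_mat_def)
  also have "\<dots> = 1"
    using \<open>i < n\<close> by simp
  finally show ?thesis .
qed

lemma sum_lessThan_add:
  fixes a b :: nat
  shows "(\<Sum>t<a + b. f t) = (\<Sum>t<a. f t) + (\<Sum>t<b. f (a + t))"
  by (induction b) (simp_all add: add.assoc)

lemma sum_rotate_mod:
  fixes q n :: nat
  assumes "q < n"
  shows "(\<Sum>t<n. g ((q + t) mod n)) = (\<Sum>l<n. g l)"
proof -
  have "(\<Sum>t<n. g ((q + t) mod n))
      = (\<Sum>t<n - q. g ((q + t) mod n)) + (\<Sum>t<q. g ((q + (n - q + t)) mod n))"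
    using sum_lessThan_add[of "\<lambda>t. g ((q + t) mod n)" "n - q" q] assms by simp
  also have "\<dots> = (\<Sum>t<n - q. g (q + t)) + (\<Sum>t<q. g t)"
    using assms by (intro arg_cong2[where f = "(+)"] sum.cong) auto
  also have "\<dots> = (\<Sum>l<n. g l)"
    using sum_lessThan_add[of g q "n - q"] assms by (simp add: add.commute)
  finally show ?thesis .
qed

lemma sum_alternating_telescope:
  fixes g :: "nat \<Rightarrow> 'a :: comm_ring_1"
  shows "(\<Sum>k<m. (-1) ^ k * (g k + g (Suc k))) + (-1) ^ m * g m = g 0"
  by (induction m) (simp_all add: algebra_simps)

lemma sum_neg_one_power_atMost: "(\<Sum>k\<le>m. (-1 :: 'a :: comm_ring_1) ^ k) = (if even m then 1 else 0)"
  by (induction m) auto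

definition comp_mult :: "nat \<Rightarrow> nat \<times> nat \<Rightarrow> nat \<Rightarrow> rat" where
  "comp_mult n M l = (\<Sum>t<snd M. if (fst M + t) mod n = l then 1 else 0)"

lemma cartan_eq_comp_mult: "cartan n c i l = comp_mult n (i, c i) l"
  by (simp add: cartan_def comp_mult_def sum.If_cases Int_def lessThan_def)

text \<open>Composition multiplicities are additive on 0 \<rightarrow> \<Omega> M \<rightarrow> P(M) \<rightarrow> M \<rightarrow> 0.\<close>

lemma cartan_eq_comp_mult_add_syzygy:
  assumes "snd M \<le> c (fst M)"
  shows "cartan n c (fst M) l = comp_mult n M l + comp_mult n (syzygy n c M) l"
proof -
  obtain i len where M: "M = (i, len)" by fastforce
  have "c i = len + (c i - len)" using assms M by simp
  then have "cartan n c i l = comp_mult n (i, len + (c i - len)) l"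
    by (simp add: cartan_eq_comp_mult)
  also have "\<dots> = comp_mult n (i, len) l + comp_mult n ((i + len) mod n, c i - len) l"
    by (simp add: comp_mult_def sum_lessThan_add mod_add_left_eq add.assoc)
  finally show ?thesis by (simp add: M syzygy_def)
qed

lemma sum_comp_mult:
  assumes "0 < n"
  shows "(\<Sum>l<n. comp_mult n M l * f l) = (\<Sum>t<snd M. f ((fst M + t) mod n))"
proof -
  have "(\<Sum>l<n. comp_mult n M l * f l)
      = (\<Sum>t<snd M. \<Sum>l<n. if (fst M + t) mod n = l then f l else 0)"
    unfolding comp_mult_def sum_distrib_right
    by (subst sum.swap) (simp add: if_distrib[of "\<lambda>x. x * _"] cong: if_cong)
  also have "\<dots> = (\<Sum>t<snd M. f ((fst M + t) mod n))"
    using assms by simp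
  finally show ?thesis .
qed

section \<open>Orbits of monotone maps on the integers\<close>

lemma funpow_fixpoint: "g x = x \<Longrightarrow> (g ^^ k) x = x"
  by (induction k) auto

lemma funpow_eq_fixpoint: "(g ^^ k) x = y \<Longrightarrow> g y = y \<Longrightarrow> k \<le> m \<Longrightarrow> (g ^^ m) x = y"
  by (induction m) (auto simp: le_Suc_eq)

lemma mono_int_orbit_stabilises_down:
  fixes g :: "int \<Rightarrow> int"
  assumes "mono g" "g u = u" "u \<le> x" "g x \<le> x"
  shows "\<exists>k. g ((g ^^ k) x) = (g ^^ k) x"
  using assms(3,4)
proof (induction "nat (x - u)" arbitrary: x rule: less_induct)
  case less
  show ?case
  proof (cases "g x = x")
    case True
    then show ?thesis by (metis funpow_0)
  next
    case False
    have "u \<le> g x" using monoD[OF \<open>mono g\<close> \<open>u \<le> x\<close>] \<open>g u = u\<close> by simp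
    moreover have "g (g x) \<le> g x" using monoD[OF \<open>mono g\<close> \<open>g x \<le> x\<close>] .
    ultimately obtain k where "g ((g ^^ k) (g x)) = (g ^^ k) (g x)"
      using less.hyps[of "g x"] False \<open>g x \<le> x\<close> by force
    then show ?thesis by (metis funpow_Suc_right o_apply)
  qed
qed

lemma mono_int_orbit_stabilises_up:
  fixes g :: "int \<Rightarrow> int"
  assumes "mono g" "g v = v" "x \<le> v" "x \<le> g x"
  shows "\<exists>k. g ((g ^^ k) x) = (g ^^ k) x"
proof -
  define g' where "g' y = - g (- y)" for y
  have "mono g'"
    by (intro monoI) (simp add: g'_def monoD[OF \<open>mono g\<close>])
  have pow: "(g' ^^ k) y = - (g ^^ k) (- y)" for k y
    by (induction k) (simp_all add: g'_def)
  obtain k where "g' ((g' ^^ k) (- x)) = (g' ^^ k) (- x)"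
    using mono_int_orbit_stabilises_down[OF \<open>mono g'\<close>, of "- v" "- x"] assms by (auto simp: g'_def)
  then show ?thesis by (auto simp: pow g'_def)
qed

lemma mono_int_orbit_stabilises:
  fixes g :: "int \<Rightarrow> int"
  assumes "mono g" "g u = u" "g v = v" "u \<le> x" "x \<le> v"
  shows "\<exists>k. g ((g ^^ k) x) = (g ^^ k) x"
  using mono_int_orbit_stabilises_down[of g u x] mono_int_orbit_stabilises_up[of g v x] assms
  by (metis linorder_le_cases)

lemma mono_int_fixpoint_between:
  fixes g :: "int \<Rightarrow> int"
  assumes "mono g" "lo \<le> hi" "lo \<le> g lo" "g hi \<le> hi"
  shows "\<exists>x. lo \<le> x \<and> x \<le> hi \<and> g x = x"
  using assms(2,3)
proof (induction "nat (hi - lo)" arbitrary: lo rule: less_induct)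
  case less
  show ?case
  proof (cases "g lo = lo")
    case True
    with less.prems show ?thesis by blast
  next
    case False
    with less.prems have "lo < g lo" by simp
    with \<open>g hi \<le> hi\<close> less.prems have "lo < hi" by (cases "lo = hi") auto
    have "lo + 1 \<le> g (lo + 1)"
      using monoD[OF \<open>mono g\<close>, of lo "lo + 1"] \<open>lo < g lo\<close> by simp
    then obtain x where "lo + 1 \<le> x \<and> x \<le> hi \<and> g x = x"
      using less.hyps[of "lo + 1"] \<open>lo < hi\<close> by force
    then show ?thesis by (intro exI[of _ x]) simp
  qed
qed

lemma int_mod_eq_within_period:
  fixes x y m :: int
  assumes "x mod m = y mod m" "x \<le> y" "y \<le> x + m"
  shows "y = x \<or> y = x + m"
proof (cases "y = x + m")
  case False
  with assms have "y - x < m" by simp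
  moreover have "m dvd y - x"
    using assms(1)[symmetric] by (simp add: mod_eq_dvd_iff)
  ultimately have "\<not> 0 < y - x"
    using zdvd_imp_le by fastforce
  with \<open>x \<le> y\<close> show ?thesis by simp
qed simp

section \<open>Syzygies of simple modules as integer intervals\<close>

locale kupisch_series =
  fixes n :: nat and c :: "nat \<Rightarrow> nat"
  assumes n_pos: "0 < n"
    and c_pos: "i < n \<Longrightarrow> 0 < c i"
    and c_le_Suc: "i < n \<Longrightarrow> c i \<le> c (Suc i mod n) + 1"
begin

text \<open>Vertices are lifted to \<int>. A pair (a, b) with a \<le> b \<le> proj_end a stands for the
  indecomposable module with top S_(a mod n) and length b - a; its syzygy is (b, proj_end a).\<close>

definition proj_end :: "int \<Rightarrow> int" where
  "proj_end a = a + int (c (nat (a mod int n)))"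

definition wrapped_end :: "int \<Rightarrow> int" where
  "wrapped_end a = proj_end a - int n"

lemma vertex_lt: "nat (a mod int n) < n"
  using n_pos by (simp add: nat_less_iff)

lemma lt_proj_end: "a < proj_end a"
  using c_pos[OF vertex_lt] by (simp add: proj_end_def)

lemma proj_end_le_Suc: "proj_end a \<le> proj_end (a + 1)"
proof -
  define i where "i = nat (a mod int n)"
  have "int (Suc i) = a mod int n + 1"
    using n_pos by (simp add: i_def)
  then have "(a + 1) mod int n = int (Suc i) mod int n"
    by (metis mod_add_left_eq)
  then have "nat ((a + 1) mod int n) = Suc i mod n"
    by (simp add: nat_mod_as_int)
  then show ?thesis
    using c_le_Suc[OF vertex_lt[of a]] by (simp add: proj_end_def i_def)
qed

lemma mono_proj_end: "mono proj_end"
proof (rule monoI)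
  fix a b :: int
  assume "a \<le> b"
  then show "proj_end a \<le> proj_end b"
  proof (induction b rule: int_ge_induct)
    case (step b)
    then show ?case using proj_end_le_Suc order_trans by blast
  qed simp
qed

lemma proj_end_add_period: "proj_end (a + t * int n) = proj_end a + t * int n"
  by (simp add: proj_end_def)

lemma mono_wrapped_end: "mono wrapped_end"
  using mono_proj_end by (simp add: mono_def wrapped_end_def)

lemma wrapped_end_add_period: "wrapped_end (a + t * int n) = wrapped_end a + t * int n"
  by (simp add: wrapped_end_def proj_end_add_period)

lemma wrapped_end_fixed_iff: "wrapped_end a = a \<longleftrightarrow> c (nat (a mod int n)) = n"
  by (auto simp: wrapped_end_def proj_end_def)

lemma funpow_proj_end: "(proj_end ^^ k) a = (wrapped_end ^^ k) a + int k * int n"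
proof (induction k)
  case (Suc k)
  have "(proj_end ^^ Suc k) a = proj_end ((wrapped_end ^^ k) a + int k * int n)"
    using Suc by simp
  also have "\<dots> = wrapped_end ((wrapped_end ^^ k) a) + int (Suc k) * int n"
    by (simp only: proj_end_add_period) (simp add: wrapped_end_def algebra_simps)
  finally show ?case by simp
qed simp

lemma funpow_wrapped_end_add_period:
  "(wrapped_end ^^ k) (a + t * int n) = (wrapped_end ^^ k) a + t * int n"
  by (induction k) (simp_all add: wrapped_end_add_period)

definition interval_module :: "int \<times> int \<Rightarrow> nat \<times> nat" where
  "interval_module p = (nat (fst p mod int n), nat (snd p - fst p))"

definition is_interval :: "int \<times> int \<Rightarrow> bool" where
  "is_interval p \<longleftrightarrow> fst p \<le> snd p \<and> snd p \<le> proj_end (fst p)"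

definition syz_interval :: "int \<times> int \<Rightarrow> int \<times> int" where
  "syz_interval p = (snd p, proj_end (fst p))"

lemma is_interval_syz_interval: "is_interval p \<Longrightarrow> is_interval (syz_interval p)"
  using mono_proj_end by (auto simp: is_interval_def syz_interval_def mono_def)

lemma syzygy_interval_module:
  assumes "is_interval p"
  shows "syzygy n c (interval_module p) = interval_module (syz_interval p)"
proof -
  obtain a b where p: "p = (a, b)" by fastforce
  with assms have "a \<le> b" "b \<le> proj_end a" by (simp_all add: is_interval_def)
  have "int ((nat (a mod int n) + nat (b - a)) mod n) = (a mod int n + (b - a)) mod int n"
    using \<open>a \<le> b\<close> n_pos by (simp add: of_nat_mod)
  also have "\<dots> = b mod int n" by (simp add: mod_add_left_eq)
  finally have "(nat (a mod int n) + nat (b - a)) mod n = nat (b mod int n)" by linarith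
  moreover have "c (nat (a mod int n)) - nat (b - a) = nat (proj_end a - b)"
    using \<open>a \<le> b\<close> \<open>b \<le> proj_end a\<close> by (simp add: proj_end_def)
  ultimately show ?thesis
    by (simp add: p interval_module_def syz_interval_def syzygy_def)
qed

lemma is_projective_interval_module:
  "is_interval p \<Longrightarrow> is_projective c (interval_module p) \<longleftrightarrow> snd p = proj_end (fst p)"
  by (auto simp: is_interval_def is_projective_def interval_module_def proj_end_def)

lemma funpow_syzygy_simple:
  "(syzygy n c ^^ m) (nat (a mod int n), 1) = interval_module ((syz_interval ^^ m) (a, a + 1))
   \<and> is_interval ((syz_interval ^^ m) (a, a + 1))"
proof (induction m)
  case 0
  show ?case using lt_proj_end[of a] by (simp add: interval_module_def is_interval_def)
next
  case (Suc m)
  then show ?case by (simp add: syzygy_interval_module is_interval_syz_interval)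
qed

lemma funpow_syz_interval_even:
  "(syz_interval ^^ (2 * k)) (a, b) = ((proj_end ^^ k) a, (proj_end ^^ k) b)"
  by (induction k) (simp_all add: mult_2 syz_interval_def)

lemma is_projective_syzygy_simple_even:
  "is_projective c ((syzygy n c ^^ (2 * k)) (nat (a mod int n), 1))
   \<longleftrightarrow> (proj_end ^^ k) (a + 1) = (proj_end ^^ Suc k) a"
  using funpow_syzygy_simple[of "2 * k" a]
  by (simp add: is_projective_interval_module funpow_syz_interval_even)

lemma is_projective_syzygy_simple_odd:
  "is_projective c ((syzygy n c ^^ Suc (2 * k)) (nat (a mod int n), 1))
   \<longleftrightarrow> (proj_end ^^ Suc k) a = (proj_end ^^ Suc k) (a + 1)"
  using funpow_syzygy_simple[of "Suc (2 * k)" a]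
  by (auto simp: is_projective_interval_module funpow_syz_interval_even syz_interval_def)

text \<open>The disjuncts say that the syzygy of order 2k, resp. 2k + 1, of the simple module at a
  is projective.\<close>

definition resolution_ends :: "int \<Rightarrow> nat \<Rightarrow> bool" where
  "resolution_ends a k \<longleftrightarrow>
     (proj_end ^^ k) (a + 1) = (proj_end ^^ Suc k) a \<or>
     (proj_end ^^ Suc k) a = (proj_end ^^ Suc k) (a + 1)"

lemma finite_pd_simple_iff:
  "(\<exists>m. is_projective c ((syzygy n c ^^ m) (nat (a mod int n), 1))) \<longleftrightarrow> (\<exists>k. resolution_ends a k)"
proof
  assume "\<exists>m. is_projective c ((syzygy n c ^^ m) (nat (a mod int n), 1))"
  then obtain m where m: "is_projective c ((syzygy n c ^^ m) (nat (a mod int n), 1))" ..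
  obtain k where "m = 2 * k \<or> m = Suc (2 * k)"
    by (metis evenE oddE Suc_eq_plus1)
  with m have "resolution_ends a k"
    by (auto simp only: resolution_ends_def
        is_projective_syzygy_simple_even is_projective_syzygy_simple_odd)
  then show "\<exists>k. resolution_ends a k" ..
next
  assume "\<exists>k. resolution_ends a k"
  then obtain k where "resolution_ends a k" ..
  then show "\<exists>m. is_projective c ((syzygy n c ^^ m) (nat (a mod int n), 1))"
    unfolding resolution_ends_def
    by (metis is_projective_syzygy_simple_even is_projective_syzygy_simple_odd)
qed

lemma resolution_ends_Suc: "resolution_ends a k \<Longrightarrow> resolution_ends a (Suc k)"
  by (auto simp: resolution_ends_def)

lemma resolution_ends_mono:
  assumes "resolution_ends a k" "k \<le> k'"
  shows "resolution_ends a k'"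
  using assms(2) by (induction rule: dec_induct) (simp_all add: assms(1) resolution_ends_Suc)

lemma resolution_ends_iff_wrapped:
  "resolution_ends a k \<longleftrightarrow>
     (wrapped_end ^^ k) (a + 1) = (wrapped_end ^^ Suc k) a + int n \<or>
     (wrapped_end ^^ Suc k) a = (wrapped_end ^^ Suc k) (a + 1)"
  unfolding resolution_ends_def funpow_proj_end by (simp add: algebra_simps)

lemma finite_gldim_iff: "finite_gldim n c \<longleftrightarrow> (\<forall>a. \<exists>k. resolution_ends a k)"
proof
  assume "finite_gldim n c"
  then obtain d where "\<forall>i<n. pd_le n c (i, 1) d"
    by (auto simp: finite_gldim_def)
  then show "\<forall>a. \<exists>k. resolution_ends a k"
    using vertex_lt by (auto simp: pd_le_def simp flip: finite_pd_simple_iff)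
next
  assume "\<forall>a. \<exists>k. resolution_ends a k"
  then have "\<exists>m. is_projective c ((syzygy n c ^^ m) (i, 1))" if "i < n" for i
    using finite_pd_simple_iff[of "int i"] that by (simp flip: of_nat_mod)
  then obtain m where m: "\<forall>i<n. is_projective c ((syzygy n c ^^ m i) (i, 1))"
    by metis
  have "m i \<le> (\<Sum>j<n. m j)" if "i < n" for i
    using that by (intro member_le_sum) auto
  with m show "finite_gldim n c"
    by (auto simp: finite_gldim_def pd_le_def)
qed

section \<open>Global dimension and projectives of dimension n\<close>

lemma finite_gldim_if_unique_full:
  assumes full: "{i. i < n \<and> c i = n} = {q}"
  shows "finite_gldim n c"
proof -
  have "q < n" using full by auto
  have fixed_iff: "wrapped_end y = y \<longleftrightarrow> y mod int n = int q" for y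
  proof -
    have "wrapped_end y = y \<longleftrightarrow> nat (y mod int n) = q"
      using full vertex_lt[of y] by (auto simp: wrapped_end_fixed_iff)
    also have "\<dots> \<longleftrightarrow> y mod int n = int q"
      using n_pos by auto
    finally show ?thesis .
  qed
  have stabilises: "\<exists>k. wrapped_end ((wrapped_end ^^ k) x) = (wrapped_end ^^ k) x" for x
  proof -
    define u where "u = x - (x - int q) mod int n"
    have "0 \<le> (x - int q) mod int n" "(x - int q) mod int n < int n"
      using n_pos by simp_all
    then have "u \<le> x" "x \<le> u + int n"
      by (simp_all add: u_def)
    moreover have "wrapped_end u = u"
      using \<open>q < n\<close> by (simp add: fixed_iff u_def mod_diff_right_eq)
    moreover from this have "wrapped_end (u + int n) = u + int n"
      using wrapped_end_add_period[of u 1] by simp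
    ultimately show ?thesis
      using mono_int_orbit_stabilises[OF mono_wrapped_end] by blast
  qed
  have "\<exists>k. resolution_ends a k" for a
  proof -
    obtain k1 where k1: "wrapped_end ((wrapped_end ^^ k1) a) = (wrapped_end ^^ k1) a"
      using stabilises by blast
    obtain k2 where k2: "wrapped_end ((wrapped_end ^^ k2) (a + 1)) = (wrapped_end ^^ k2) (a + 1)"
      using stabilises by blast
    define K where "K = k1 + k2"
    define A where "A = (wrapped_end ^^ k1) a"
    define B where "B = (wrapped_end ^^ k2) (a + 1)"
    have A: "(wrapped_end ^^ K) a = A" "(wrapped_end ^^ Suc K) a = A"
      using funpow_eq_fixpoint[OF A_def[symmetric] k1[folded A_def]] k1[folded A_def]
      by (simp_all add: K_def)
    have B: "(wrapped_end ^^ K) (a + 1) = B" "(wrapped_end ^^ Suc K) (a + 1) = B"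
      using funpow_eq_fixpoint[OF B_def[symmetric] k2[folded B_def]] k2[folded B_def]
      by (simp_all add: K_def)
    have "A \<le> B"
      using funpow_mono[OF mono_wrapped_end, of a "a + 1" K] A B by simp
    moreover have "B \<le> A + int n"
      using funpow_mono[OF mono_wrapped_end, of "a + 1" "a + int n" K]
        funpow_wrapped_end_add_period[of K a 1] n_pos A B
      by simp
    moreover have "A mod int n = B mod int n"
      using k1 k2 by (simp add: fixed_iff A_def B_def)
    ultimately have "B = A \<or> B = A + int n"
      using int_mod_eq_within_period by blast
    then have "resolution_ends a K"
      using A B by (auto simp only: resolution_ends_iff_wrapped)
    then show ?thesis ..
  qed
  then show ?thesis by (simp add: finite_gldim_iff)
qed

text \<open>Between two fixed points x < y < x + n of wrapped_end, finite global dimension forces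
  every orbit starting in [x, y] to reach x, which fails at y.\<close>

lemma no_two_full_vertices:
  assumes fg: "finite_gldim n c" and "i < j" "j < n" "c i = n" "c j = n"
  shows False
proof -
  define x y where "x = int i" and "y = int j"
  have fx: "wrapped_end x = x" and fy: "wrapped_end y = y"
    using assms by (simp_all add: wrapped_end_fixed_iff x_def y_def)
  have "y < x + int n" using assms by (simp add: x_def y_def)
  have reach: "\<exists>k. (wrapped_end ^^ k) (x + int d) = x" if "x + int d \<le> y" for d
    using that
  proof (induction d)
    case 0
    show ?case by (intro exI[of _ 0]) simp
  next
    case (Suc d)
    define a where "a = x + int d"
    obtain k where k: "(wrapped_end ^^ k) a = x"
      using Suc by (auto simp: a_def)
    obtain k0 where "resolution_ends a k0"
      using fg finite_gldim_iff by blast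
    then have ends: "resolution_ends a (k0 + k)"
      by (rule resolution_ends_mono) simp
    have "(wrapped_end ^^ (k0 + k)) a = x" "(wrapped_end ^^ Suc (k0 + k)) a = x"
      using funpow_eq_fixpoint[OF k fx] fx by simp_all
    moreover have "(wrapped_end ^^ (k0 + k)) (a + 1) \<le> y"
      using funpow_mono[OF mono_wrapped_end, of "a + 1" y "k0 + k"]
        funpow_fixpoint[where g = wrapped_end, OF fy] Suc.prems
      by (simp add: a_def)
    ultimately have "(wrapped_end ^^ Suc (k0 + k)) (a + 1) = x"
      using ends \<open>y < x + int n\<close> by (auto simp only: resolution_ends_iff_wrapped)
    then show ?case
      by (intro exI[of _ "Suc (k0 + k)"]) (simp add: a_def ac_simps)
  qed
  obtain k where "(wrapped_end ^^ k) y = x"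
    using reach[of "j - i"] \<open>i < j\<close> by (auto simp: x_def y_def of_nat_diff)
  then show False
    using funpow_fixpoint[where g = wrapped_end, OF fy] \<open>i < j\<close> by (simp add: x_def y_def)
qed

lemma full_vertex_unique:
  assumes "finite_gldim n c" "i < n" "j < n" "c i = n" "c j = n"
  shows "i = j"
  using no_two_full_vertices[OF assms(1)] assms by (metis linorder_neqE_nat)

section \<open>The inverse Cartan matrix\<close>

definition syz_simple :: "nat \<Rightarrow> nat \<Rightarrow> nat \<times> nat" where
  "syz_simple j k = (syzygy n c ^^ k) (j, 1)"

lemma syz_simple_bounds:
  assumes "j < n"
  shows "fst (syz_simple j k) < n" "snd (syz_simple j k) \<le> c (fst (syz_simple j k))"
proof -
  have "syz_simple j k = interval_module ((syz_interval ^^ k) (int j, int j + 1))"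
    and "is_interval ((syz_interval ^^ k) (int j, int j + 1))"
    using funpow_syzygy_simple[of k "int j"] assms
    by (simp_all add: syz_simple_def flip: of_nat_mod)
  then show "fst (syz_simple j k) < n" "snd (syz_simple j k) \<le> c (fst (syz_simple j k))"
    using vertex_lt by (auto simp: interval_module_def is_interval_def proj_end_def)
qed

text \<open>pdim j is the projective dimension of the simple module at j (an arbitrary value if it
  is infinite). Row j of the inverse Cartan matrix is the alternating sum of the tops of the
  minimal projective resolution of that simple module.\<close>

definition pdim :: "nat \<Rightarrow> nat" where
  "pdim j = (LEAST m. is_projective c (syz_simple j m))"

definition inv_cartan :: "nat \<Rightarrow> nat \<Rightarrow> rat" where
  "inv_cartan j i = (\<Sum>k\<le>pdim j. if fst (syz_simple j k) = i then (-1) ^ k else 0)"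

definition even_pdim :: "nat \<Rightarrow> nat" where
  "even_pdim j = (if even (pdim j) then 1 else 0)"

lemma sum_inv_cartan_mult:
  assumes "j < n"
  shows "(\<Sum>i<n. inv_cartan j i * f i) = (\<Sum>k\<le>pdim j. (-1) ^ k * f (fst (syz_simple j k)))"
  unfolding inv_cartan_def sum_distrib_right
  using syz_simple_bounds(1)[OF assms]
  by (subst sum.swap) (simp add: if_distrib[of "\<lambda>x. x * _"] cong: if_cong)

lemma inv_cartan_mult_cartan:
  assumes fg: "finite_gldim n c" and "j < n" "l < n"
  shows "(\<Sum>i<n. inv_cartan j i * cartan n c i l) = (if j = l then 1 else 0)"
proof -
  define g where "g k = comp_mult n (syz_simple j k) l" for k
  have "\<exists>m. is_projective c (syz_simple j m)"
    using fg \<open>j < n\<close> by (auto simp: finite_gldim_def pd_le_def syz_simple_def)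
  then have "is_projective c (syz_simple j (pdim j))"
    unfolding pdim_def by (rule LeastI_ex)
  then have "g (Suc (pdim j)) = 0"
    by (simp add: g_def syz_simple_def syzygy_def is_projective_def comp_mult_def)
  have "cartan n c (fst (syz_simple j k)) l = g k + g (Suc k)" for k
    using cartan_eq_comp_mult_add_syzygy[where M = "syz_simple j k" and n = n and c = c,
        OF syz_simple_bounds(2)[OF \<open>j < n\<close>]]
    by (simp add: g_def syz_simple_def)
  then have "(\<Sum>i<n. inv_cartan j i * cartan n c i l)
      = (\<Sum>k<Suc (pdim j). (-1) ^ k * (g k + g (Suc k)))"
    by (simp add: sum_inv_cartan_mult[OF \<open>j < n\<close>] lessThan_Suc_atMost)
  also have "\<dots> = g 0"
    using sum_alternating_telescope[of g "Suc (pdim j)"] \<open>g (Suc (pdim j)) = 0\<close> by simp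
  also have "g 0 = (if j = l then 1 else 0)"
    using \<open>j < n\<close> \<open>l < n\<close> by (simp add: g_def syz_simple_def comp_mult_def)
  finally show ?thesis .
qed

lemma sum_inv_cartan_row:
  assumes "j < n"
  shows "(\<Sum>i<n. inv_cartan j i) = of_nat (even_pdim j)"
  using sum_inv_cartan_mult[OF assms, of "\<lambda>_. 1"]
  by (simp add: even_pdim_def sum_neg_one_power_atMost)

lemma is_inverse_mat_inv_cartan:
  assumes "finite_gldim n c"
  shows "is_inverse_mat n (cartan n c) inv_cartan"
  using inv_cartan_mult_cartan[OF assms] by (intro is_inverse_mat_if_left_inverse) blast

lemma magnitude_eq_sum_even_pdim:
  assumes "finite_gldim n c"
  shows "magnitude n c = of_nat (\<Sum>j<n. even_pdim j)"
proof -
  have "magnitude n c = (\<Sum>j<n. \<Sum>i<n. inv_cartan j i)"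
    by (rule magnitude_eq_if_inverse[OF is_inverse_mat_inv_cartan[OF assms]])
  also have "\<dots> = (\<Sum>j<n. of_nat (even_pdim j))"
    by (intro sum.cong) (simp_all add: sum_inv_cartan_row)
  finally show ?thesis by simp
qed

lemma sum_even_pdim_projective:
  assumes "finite_gldim n c" "i < n"
  shows "(\<Sum>t<c i. even_pdim ((i + t) mod n)) = 1"
proof -
  have "of_nat (\<Sum>t<c i. even_pdim ((i + t) mod n))
      = (\<Sum>l<n. cartan n c i l * of_nat (even_pdim l) :: rat)"
    using sum_comp_mult[OF n_pos, of "(i, c i)"] by (simp add: cartan_eq_comp_mult)
  also have "\<dots> = (\<Sum>l<n. cartan n c i l * (\<Sum>j<n. inv_cartan l j))"
    by (intro sum.cong) (simp_all add: sum_inv_cartan_row)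
  also have "\<dots> = 1"
    using sum_mult_row_sums_inverse[OF is_inverse_mat_inv_cartan] assms by blast
  finally show ?thesis by (simp only: of_nat_eq_1_iff)
qed

lemma sum_even_pdim_if_full:
  assumes "finite_gldim n c" "q < n" "c q = n"
  shows "(\<Sum>j<n. even_pdim j) = 1"
  using sum_even_pdim_projective[OF assms(1,2)] assms(3) sum_rotate_mod[OF assms(2), of even_pdim]
  by simp

lemma sum_even_pdim_if_long:
  assumes "finite_gldim n c" "i < n" "n \<le> c i"
  shows "(\<Sum>j<n. even_pdim j) = 1"
proof -
  have window: "(\<Sum>t<c i. even_pdim ((i + t) mod n)) = 1"
    by (rule sum_even_pdim_projective[OF assms(1,2)])
  have "(\<Sum>j<n. even_pdim j) \<le> 1"
    using sum_mono2[of "{..<c i}" "{..<n}" "\<lambda>t. even_pdim ((i + t) mod n)"] window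
      sum_rotate_mod[OF assms(2), of even_pdim] assms(3) by simp
  moreover have "(\<Sum>j<n. even_pdim j) \<noteq> 0"
  proof
    assume "(\<Sum>j<n. even_pdim j) = 0"
    then have "even_pdim ((i + t) mod n) = 0" for t
      using n_pos by simp
    then show False using window by simp
  qed
  ultimately show ?thesis by linarith
qed

lemma c_le_if_even_pdim:
  assumes fg: "finite_gldim n c" and "p < n" "even_pdim p = 1"
  shows "c p \<le> n"
proof (rule ccontr)
  assume "\<not> c p \<le> n"
  then have "(\<Sum>t\<in>{0, n}. even_pdim ((p + t) mod n)) \<le> (\<Sum>t<c p. even_pdim ((p + t) mod n))"
    by (intro sum_mono2) auto
  then show False
    using sum_even_pdim_projective[OF fg \<open>p < n\<close>] assms n_pos by simp
qed

lemma le_c_Suc_if_unique_even_pdim: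
  assumes fg: "finite_gldim n c" and "p < n"
    and others: "\<And>l. l < n \<Longrightarrow> l \<noteq> p \<Longrightarrow> even_pdim l = 0"
  shows "n \<le> c (Suc p mod n)"
proof -
  define i where "i = Suc p mod n"
  have "i < n"
    using n_pos by (simp add: i_def)
  have "(\<Sum>t<c i. even_pdim ((i + t) mod n)) \<noteq> 0"
    using sum_even_pdim_projective[OF fg \<open>i < n\<close>] by simp
  then obtain t where "t \<in> {..<c i}" "even_pdim ((i + t) mod n) \<noteq> 0"
    by (rule sum.not_neutral_contains_not_neutral)
  have "(i + t) mod n = p"
  proof (rule ccontr)
    assume "(i + t) mod n \<noteq> p"
    then show False
      using others[of "(i + t) mod n"] \<open>even_pdim ((i + t) mod n) \<noteq> 0\<close> n_pos by simp
  qed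
  then have "(p + Suc t) mod n = p mod n"
    using \<open>p < n\<close> unfolding i_def mod_add_left_eq by simp
  then have "n dvd Suc t"
    by (simp add: mod_eq_dvd_iff_nat)
  then show ?thesis
    using dvd_imp_le[of n "Suc t"] \<open>t \<in> {..<c i}\<close> unfolding i_def by simp
qed

text \<open>The unique vertex p of even projective dimension has c p \<le> n \<le> c (p + 1), so
  wrapped_end moves p down and p + 1 - n up and has a fixed point in between.\<close>

lemma unique_full_if_sum_even_pdim:
  assumes fg: "finite_gldim n c" and "(\<Sum>j<n. even_pdim j) = 1"
  shows "card {i. i < n \<and> c i = n} = 1"
proof -
  obtain p where "p < n" "even_pdim p = 1"
    and others: "\<And>l. l < n \<Longrightarrow> l \<noteq> p \<Longrightarrow> even_pdim l = 0"
    using sum_eq_1_iff[of "{..<n}" even_pdim] assms(2) by auto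
  have "wrapped_end (int p) \<le> int p"
    using c_le_if_even_pdim[OF fg \<open>p < n\<close> \<open>even_pdim p = 1\<close>] \<open>p < n\<close>
    by (simp add: wrapped_end_def proj_end_def flip: of_nat_mod)
  moreover have "int p + 1 - int n \<le> wrapped_end (int p + 1 - int n)"
  proof -
    have "nat ((int p + 1) mod int n) = Suc p mod n"
      by (metis Suc_eq_plus1 nat_int of_nat_1 of_nat_add of_nat_mod)
    then have "wrapped_end (int p + 1) = int p + 1 + int (c (Suc p mod n)) - int n"
      by (simp add: wrapped_end_def proj_end_def)
    moreover have "wrapped_end (int p + 1 - int n) = wrapped_end (int p + 1) - int n"
      using wrapped_end_add_period[of "int p + 1" "-1"] by simp
    ultimately show ?thesis
      using le_c_Suc_if_unique_even_pdim[OF fg \<open>p < n\<close> others] by simp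
  qed
  moreover have "int p + 1 - int n \<le> int p"
    using n_pos by simp
  ultimately obtain x where "wrapped_end x = x"
    using mono_int_fixpoint_between[OF mono_wrapped_end] by blast
  define r where "r = nat (x mod int n)"
  have "r < n" "c r = n"
    using vertex_lt \<open>wrapped_end x = x\<close> by (simp_all add: r_def wrapped_end_fixed_iff)
  then have "{i. i < n \<and> c i = n} = {r}"
    using full_vertex_unique[OF fg _ \<open>r < n\<close> _ \<open>c r = n\<close>] by blast
  then show ?thesis by simp
qed

end

lemma kupisch_series_if_nakayama_kupisch:
  assumes "nakayama_kupisch n c"
  shows "kupisch_series n c"
proof (cases "nakayama_linear n c")
  case True
  then have "0 < n" "c (n - 1) = 1"
    and step: "\<And>i. Suc i < n \<Longrightarrow> 2 \<le> c i \<and> c i - 1 \<le> c (Suc i)"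
    by (auto simp: nakayama_linear_def)
  have "0 < c i \<and> c i \<le> c (Suc i mod n) + 1" if "i < n" for i
  proof (cases "Suc i < n")
    case True
    with step[OF True] show ?thesis by (simp add: le_diff_conv)
  next
    case False
    with \<open>i < n\<close> have "i = n - 1" by simp
    with \<open>c (n - 1) = 1\<close> show ?thesis by simp
  qed
  with \<open>0 < n\<close> show ?thesis by unfold_locales auto
next
  case False
  with assms show ?thesis
    by unfold_locales (auto simp: nakayama_kupisch_def nakayama_cyclic_def)
qed

lemma le_loewy_length_iff:
  assumes "0 < n"
  shows "m \<le> loewy_length n c \<longleftrightarrow> (\<exists>i<n. m \<le> c i)"
proof -
  have "c ` {..<n} \<noteq> {}" using assms by auto
  then show ?thesis by (auto simp: loewy_length_def Max_ge_iff)
qed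

theorem proposition4p4:
  fixes n :: nat and c :: "nat \<Rightarrow> nat"
  assumes "nakayama_kupisch n c"
  shows "((finite_gldim n c \<and> magnitude n c = 1) \<longleftrightarrow> card {i. i < n \<and> c i = n} = 1)
       \<and> (card {i. i < n \<and> c i = n} = 1 \<longleftrightarrow> (finite_gldim n c \<and> loewy_length n c \<ge> n))"
proof -
  interpret kupisch_series n c
    using assms by (rule kupisch_series_if_nakayama_kupisch)
  have magnitude: "finite_gldim n c \<Longrightarrow> magnitude n c = 1 \<longleftrightarrow> (\<Sum>j<n. even_pdim j) = 1"
    by (simp add: magnitude_eq_sum_even_pdim del: of_nat_sum)
  have "finite_gldim n c \<and> (\<Sum>j<n. even_pdim j) = 1 \<and> n \<le> loewy_length n c"
    if unique: "card {i. i < n \<and> c i = n} = 1"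
  proof -
    obtain q where full: "{i. i < n \<and> c i = n} = {q}"
      using unique by (rule card_1_singletonE)
    then have "q < n" "c q = n" by auto
    with finite_gldim_if_unique_full[OF full] show ?thesis
      using sum_even_pdim_if_full le_loewy_length_iff[OF n_pos] by auto
  qed
  moreover have "(\<Sum>j<n. even_pdim j) = 1" if "finite_gldim n c" "n \<le> loewy_length n c"
    using that sum_even_pdim_if_long le_loewy_length_iff[OF n_pos] by blast
  ultimately show ?thesis
    using magnitude unique_full_if_sum_even_pdim by blast
qed

end
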